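(* Let $\Sigma$ be a compact hyperbolic surface and $M=U\times\mathbf{R}$ with $\alpha=(\theta+dt)\wedge(\sinh t\,\omega-\cosh t\,\eta)$. If $f\in C^\infty(M)$ satisfies $d_Af=0$, i.e. $Xf+\tanh t\,Zf=0$ and $Yf-\partial_tf=0$, then $f$ is constant. Thus $H^0_A\cong\mathbf{R}$.
   Context: Let $\Sigma$ be a compact oriented surface with a Riemannian metric of constant curvature $-1$, $\pi:U\to\Sigma$ its unit circle bundle, with canonical frame $X$ (geodesic flow), $Y$ (horizontal lift of $Ie$ at $e$, $I$ rotation by $+\pi/2$), $Z$ (positive fibre rotation) and dual coframe $\omega,\theta,\eta$, satisfying $[Z,X]=Y$, $[Z,Y]=-X$, $[X,Y]=-Z$, $d\omega=\eta\wedge\theta$, $d\theta=-\eta\wedge\omega$, $d\eta=\omega\wedge\theta$. On $M=U\times\mathbf{R}$ (fibred over $\Sigma$ by $(e,t)\mapsto\pi(e)$) the form $\alpha=d(\cosh t\,\omega-\sinh t\,\eta)=(\theta+dt)\wedge(\sinh t\,\omega-\cosh t\,\eta)$ is closed, decomposable and nondegenerate on fibres; it defines a flat symplectic connection. Here $H^*=\mathrm{span}(\omega,\theta)$ (annihilator of the vertical bundle spanned by $Z,\partial_t$), and for $f\in C^\infty(M)$, $d_Af=(Xf+\tanh t\,Zf)\omega+(Yf-\partial_tf)\theta$. *)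

theory Defs
  imports "HOL-Analysis.Analysis"
begin

primrec Ck_on :: "nat \<Rightarrow> 'a::real_normed_vector set \<Rightarrow> ('a \<Rightarrow> real) \<Rightarrow> bool" where
  "Ck_on 0 S f = continuous_on S f"
| "Ck_on (Suc k) S f =
     (f differentiable_on S \<and> (\<forall>v. Ck_on k S (\<lambda>x. frechet_derivative f (at x) v)))"

definition Cinf_on :: "'a::real_normed_vector set \<Rightarrow> ('a \<Rightarrow> real) \<Rightarrow> bool" where
  "Cinf_on S f \<longleftrightarrow> (\<forall>k. Ck_on k S f)"

definition dderiv :: "('a::real_normed_vector \<Rightarrow> real) \<Rightarrow> 'a \<Rightarrow> 'a \<Rightarrow> real" where
  "dderiv f p v = frechet_derivative f (at p) v"

definition upper_half :: "complex set" where
  "upper_half = {z. Im z > 0}"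

definition SL2 :: "(real^2^2) set" where
  "SL2 = {g. det g = 1}"

definition mob :: "real^2^2 \<Rightarrow> complex \<Rightarrow> complex" where
  "mob g z = (of_real (g$1$1) * z + of_real (g$1$2)) / (of_real (g$2$1) * z + of_real (g$2$2))"

text \<open>Automorphy factor c z + d; the derivative of mob g at z is 1/(cz+d)^2.\<close>
definition jfac :: "real^2^2 \<Rightarrow> complex \<Rightarrow> complex" where
  "jfac g z = of_real (g$2$1) * z + of_real (g$2$2)"

text \<open>A cocompact torsion-free discrete subgroup of SL(2,R) (acting freely on H
  modulo +-1): then Gamma\H is a compact oriented hyperbolic surface, and every
  such surface arises this way.\<close>
definition cocompact_fuchsian :: "(real^2^2) set \<Rightarrow> bool" where
  "cocompact_fuchsian \<Gamma> \<longleftrightarrow>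
     \<Gamma> \<subseteq> SL2 \<and> mat 1 \<in> \<Gamma> \<and>
     (\<forall>g\<in>\<Gamma>. \<forall>h\<in>\<Gamma>. g ** h \<in> \<Gamma>) \<and>
     (\<forall>g\<in>\<Gamma>. matrix_inv g \<in> \<Gamma>) \<and>
     (\<exists>e>0. \<forall>g\<in>\<Gamma>. g \<noteq> mat 1 \<longrightarrow> dist g (mat 1) \<ge> e) \<and>
     (\<forall>g\<in>\<Gamma>. g \<noteq> mat 1 \<and> g \<noteq> - mat 1 \<longrightarrow> (\<forall>z\<in>upper_half. mob g z \<noteq> z)) \<and>
     (\<exists>K. compact K \<and> K \<subseteq> upper_half \<and> (\<forall>z\<in>upper_half. \<exists>g\<in>\<Gamma>. mob g z \<in> K))"

text \<open>A point (z, phi, t): z in H, phi the (Euclidean) angle of the unit tangent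
  vector y*cis phi at z, t in R.  Functions on M = U(Gamma\H) x R are functions
  on this domain invariant under the induced action of Gamma (which includes the
  2 pi periodicity in phi).\<close>
definition Mdom :: "(complex \<times> real \<times> real) set" where
  "Mdom = {(z, \<phi>, t). Im z > 0}"

definition Gamma_invariant :: "(real^2^2) set \<Rightarrow> (complex \<times> real \<times> real \<Rightarrow> real) \<Rightarrow> bool" where
  "Gamma_invariant \<Gamma> f \<longleftrightarrow>
     (\<forall>g\<in>\<Gamma>. \<forall>z \<phi> \<phi>' t. Im z > 0 \<longrightarrow>
        cis \<phi>' = cis \<phi> * cnj (jfac g z) / jfac g z \<longrightarrow>
        f (mob g z, \<phi>', t) = f (z, \<phi>, t))"

text \<open>Canonical frame: X geodesic flow, Y = [Z,X], Z = fibre rotation, and d/dt.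
  These satisfy [Z,X]=Y, [Z,Y]=-X, [X,Y]=-Z.\<close>
definition Xv :: "complex \<times> real \<times> real \<Rightarrow> complex \<times> real \<times> real" where
  "Xv p = (case p of (z, \<phi>, t) \<Rightarrow> (of_real (Im z) * cis \<phi>, - cos \<phi>, 0))"

definition Yv :: "complex \<times> real \<times> real \<Rightarrow> complex \<times> real \<times> real" where
  "Yv p = (case p of (z, \<phi>, t) \<Rightarrow> (of_real (Im z) * \<i> * cis \<phi>, sin \<phi>, 0))"

definition Zv :: "complex \<times> real \<times> real" where
  "Zv = (0, 1, 0)"

definition Tv :: "complex \<times> real \<times> real" where
  "Tv = (0, 0, 1)"

end

theory Submission
  imports Defs
begin

text \<open>As
  \<open>tanh 0 = 0\<close>, the equation \<open>d\<^sub>A f = 0\<close> says that \<open>f\<close> is constant along the integral curves of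
  \<open>Y - \<partial>\<^sub>t\<close>, and along the geodesic flow \<open>X\<close> on the slice \<open>t = 0\<close>. The Moebius action of
  \<open>SL(2,R)\<close> lifts to \<open>M\<close> preserving \<open>X\<close>, \<open>Y\<close> and \<open>\<partial>\<^sub>t\<close>, so \<open>F(g) = f(g\<cdot>(\<i>, \<i>), 0)\<close> is invariant
  under right multiplication by the diagonal subgroup. Hopf's argument upgrades this to the two
  unipotent subgroups: far along a geodesic, horocyclic displacements become short, \<open>\<Gamma>\<close> moves
  the points back into a compact set, and \<open>f\<close> is uniformly continuous there. These subgroups and
  \<open>-1\<close> generate \<open>SL(2,R)\<close>, so \<open>F\<close> is constant; hence \<open>f\<close> is constant on \<open>t = 0\<close>, and every
  point of \<open>M\<close> is joined to \<open>t = 0\<close> by an integral curve of \<open>Y - \<partial>\<^sub>t\<close>.\<close>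


section \<open>Real Moebius transformations and the unit tangent bundle of \<open>H\<close>\<close>

definition mobius :: "real \<Rightarrow> real \<Rightarrow> real \<Rightarrow> real \<Rightarrow> complex \<Rightarrow> complex" where
  "mobius a b c d z = (of_real a * z + of_real b) / (of_real c * z + of_real d)"

definition jfactor :: "real \<Rightarrow> real \<Rightarrow> complex \<Rightarrow> complex" where
  "jfactor c d z = of_real c * z + of_real d"

lemma mob_eq_mobius: "mob g = mobius (g$1$1) (g$1$2) (g$2$1) (g$2$2)"
  by (simp add: fun_eq_iff mob_def mobius_def)

lemma jfac_eq_jfactor: "jfac g = jfactor (g$2$1) (g$2$2)"
  by (simp add: fun_eq_iff jfac_def jfactor_def)

lemma Im_jfactor: "Im (jfactor c d z) = c * Im z"
  by (simp add: jfactor_def)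

lemma jfactor_nonzero:
  assumes "a*d - b*c = 1" "Im z > 0"
  shows "jfactor c d z \<noteq> 0"
proof (cases "c = 0")
  case True
  then show ?thesis using assms(1) by (auto simp: jfactor_def)
next
  case False
  then show ?thesis using assms(2) Im_jfactor[of c d z] by force
qed

lemma jfactor_not_nonpos_Reals:
  assumes "a*d - b*c = 1" "c > 0 \<or> (c = 0 \<and> d > 0)" "Im z > 0"
  shows "jfactor c d z \<notin> \<real>\<^sub>\<le>\<^sub>0"
  using assms by (auto simp: jfactor_def complex_nonpos_Reals_iff)

lemma Im_mobius:
  assumes "a*d - b*c = 1"
  shows "Im (mobius a b c d z) = Im z / (cmod (jfactor c d z))\<^sup>2"
proof -
  have "Im ((of_real a * z + of_real b) * cnj (jfactor c d z)) = (a*d - b*c) * Im z"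
    by (simp add: jfactor_def algebra_simps)
  then show ?thesis
    using assms by (simp add: mobius_def jfactor_def[symmetric] Im_divide cmod_power2)
qed

lemma Im_mobius_pos: "a*d - b*c = 1 \<Longrightarrow> Im z > 0 \<Longrightarrow> Im (mobius a b c d z) > 0"
  using Im_mobius[of a d b c z] jfactor_nonzero[of a d b c z] by simp

lemma mobius_diff:
  assumes "a*d - b*c = 1" "Im z1 > 0" "Im z2 > 0"
  shows "mobius a b c d z2 - mobius a b c d z1 = (z2 - z1) / (jfactor c d z1 * jfactor c d z2)"
proof -
  have "jfactor c d z1 \<noteq> 0" "jfactor c d z2 \<noteq> 0"
    using jfactor_nonzero assms by auto
  moreover have "(of_real a * of_real d - of_real b * of_real c :: complex) = 1"
    by (metis assms(1) of_real_1 of_real_diff of_real_mult)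
  ultimately show ?thesis
    unfolding mobius_def jfactor_def[symmetric]
    by (simp add: divide_simps) (simp add: jfactor_def algebra_simps)
qed

lemma has_field_derivative_mobius:
  assumes "a*d - b*c = 1" "Im z > 0"
  shows "(mobius a b c d has_field_derivative 1 / (jfactor c d z)\<^sup>2) (at z)"
proof -
  have "jfactor c d z \<noteq> 0" using jfactor_nonzero[OF assms] .
  moreover have "(of_real a * of_real d - of_real b * of_real c :: complex) = 1"
    by (metis assms(1) of_real_1 of_real_diff of_real_mult)
  ultimately show ?thesis
    unfolding mobius_def[abs_def] jfactor_def
    by (auto intro!: derivative_eq_intros simp: power2_eq_square algebra_simps)
qed

text \<open>A unit tangent vector at \<open>z\<close> is \<open>Im z * u\<close> with \<open>\<bar>u\<bar> = 1\<close>. The differential of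
  \<open>mobius\<close> is \<open>1 / j\<^sup>2\<close> and \<open>Im\<close> is scaled by \<open>1 / \<bar>j\<bar>\<^sup>2\<close>, so the direction \<open>u\<close> becomes
  \<open>u * cnj j / j\<close>.\<close>
definition tangent_act :: "real \<Rightarrow> real \<Rightarrow> real \<Rightarrow> real \<Rightarrow> complex \<times> complex \<Rightarrow> complex \<times> complex" where
  "tangent_act a b c d p =
     (mobius a b c d (fst p), snd p * cnj (jfactor c d (fst p)) / jfactor c d (fst p))"

lemma tangent_act_uminus: "tangent_act (-a) (-b) (-c) (-d) = tangent_act a b c d"
proof -
  have "mobius (-a) (-b) (-c) (-d) z = mobius a b c d z" for z
    using minus_divide_divide[of "of_real a * z + of_real b" "of_real c * z + of_real d"]
    by (simp add: mobius_def algebra_simps)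
  moreover have "jfactor (-c) (-d) z = - jfactor c d z" for z
    by (simp add: jfactor_def)
  ultimately show ?thesis by (simp add: fun_eq_iff tangent_act_def)
qed

lemma norm_snd_tangent_act:
  "a*d - b*c = 1 \<Longrightarrow> Im z > 0 \<Longrightarrow> cmod (snd (tangent_act a b c d (z, u))) = cmod u"
  using jfactor_nonzero[of a d b c z] by (simp add: tangent_act_def norm_divide norm_mult)

lemma tangent_act_compose:
  assumes "a*d - b*c = 1" "a'*d' - b'*c' = 1" "Im z > 0"
  shows "tangent_act a b c d (tangent_act a' b' c' d' (z, u)) =
         tangent_act (a*a' + b*c') (a*b' + b*d') (c*a' + d*c') (c*b' + d*d') (z, u)"
proof -
  define w where "w = mobius a' b' c' d' z"
  define J where "J = jfactor c' d' z"
  have J: "J \<noteq> 0" using jfactor_nonzero[OF assms(2,3)] by (simp add: J_def)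
  have K: "jfactor c d w \<noteq> 0"
    using jfactor_nonzero[OF assms(1) Im_mobius_pos[OF assms(2,3)]] by (simp add: w_def)
  have wJ: "w * J = of_real a' * z + of_real b'"
    using J by (simp add: w_def J_def mobius_def jfactor_def)
  have "jfactor c d w * J = of_real c * (w * J) + of_real d * J"
    by (simp add: jfactor_def algebra_simps)
  then have jJ: "jfactor c d w * J = jfactor (c*a' + d*c') (c*b' + d*d') z"
    unfolding wJ by (simp add: jfactor_def J_def algebra_simps)
  have "(of_real a * w + of_real b) * J = of_real a * (w * J) + of_real b * J"
    by (simp add: algebra_simps)
  then have aJ: "(of_real a * w + of_real b) * J = of_real (a*a' + b*c') * z + of_real (a*b' + b*d')"
    unfolding wJ by (simp add: J_def jfactor_def algebra_simps)
  have "mobius a b c d w = mobius (a*a' + b*c') (a*b' + b*d') (c*a' + d*c') (c*b' + d*d') z"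
    using J aJ jJ mult_divide_mult_cancel_right[OF J, of "of_real a * w + of_real b" "jfactor c d w"]
    by (simp add: mobius_def jfactor_def)
  moreover have "u * cnj J / J * cnj (jfactor c d w) / jfactor c d w
      = u * cnj (jfactor c d w * J) / (jfactor c d w * J)"
    using J K by (simp add: field_simps)
  ultimately show ?thesis
    by (simp add: tangent_act_def w_def[symmetric] J_def[symmetric] jJ)
qed

lemma obtain_normalized_representative:
  assumes "a*d - b*c = 1"
  obtains a' b' c' d' where "a'*d' - b'*c' = 1" "c' > 0 \<or> (c' = 0 \<and> d' > 0)"
    "tangent_act a' b' c' d' = tangent_act a b c d"
proof (cases "c > 0 \<or> (c = 0 \<and> d > 0)")
  case True
  then show ?thesis using that assms by blast
next
  case False
  moreover have "d \<noteq> 0" if "c = 0" using assms that by auto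
  ultimately have "-c > 0 \<or> (-c = 0 \<and> -d > 0)" by auto
  then show ?thesis
    using that[of "-a" "-d" "-b" "-c"] assms tangent_act_uminus by auto
qed

lemma tangent_act_rotation:
  "tangent_act (cos \<theta>) (- sin \<theta>) (sin \<theta>) (cos \<theta>) (\<i>, \<i>) = (\<i>, cis (pi/2 - 2*\<theta>))"
proof -
  have j: "jfactor (sin \<theta>) (cos \<theta>) \<i> = cis \<theta>" by (simp add: jfactor_def complex_eq_iff)
  have "of_real (cos \<theta>) * \<i> + of_real (- sin \<theta>) = \<i> * cis \<theta>" by (simp add: complex_eq_iff)
  then have "mobius (cos \<theta>) (- sin \<theta>) (sin \<theta>) (cos \<theta>) \<i> = \<i>"
    using j by (simp add: mobius_def jfactor_def)
  moreover have "\<i> * cnj (cis \<theta>) / cis \<theta> = cis (pi/2 - 2*\<theta>)"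
  proof -
    have "\<i> * cnj (cis \<theta>) / cis \<theta> = cis (pi/2) * cis (-\<theta>) / cis \<theta>" by (simp add: cis_cnj)
    also have "\<dots> = cis (pi/2 + -\<theta> - \<theta>)" by (simp only: cis_mult cis_divide)
    finally show ?thesis by simp
  qed
  ultimately show ?thesis using j by (simp add: tangent_act_def)
qed

lemma tangent_act_affine:
  assumes "Im w > 0"
  shows "tangent_act (sqrt (Im w)) (Re w / sqrt (Im w)) 0 (1 / sqrt (Im w)) (\<i>, u) = (w, u)"
  using assms by (simp add: tangent_act_def mobius_def jfactor_def complex_eq_iff field_simps)

lemma unimodular_mult:
  fixes a b c d a' b' c' d' :: real
  assumes "a*d - b*c = 1" "a'*d' - b'*c' = 1"
  shows "(a*a' + b*c') * (c*b' + d*d') - (a*b' + b*d') * (c*a' + d*c') = 1"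
proof -
  have "(a*a' + b*c') * (c*b' + d*d') - (a*b' + b*d') * (c*a' + d*c') = (a*d - b*c) * (a'*d' - b'*c')"
    by algebra
  with assms show ?thesis by simp
qed

lemma tangent_act_transitive:
  assumes "Im w > 0"
  obtains a b c d where "a*d - b*c = 1" "c > 0 \<or> (c = 0 \<and> d > 0)"
    "tangent_act a b c d (\<i>, \<i>) = (w, cis \<phi>)"
proof -
  define s where "s = sqrt (Im w)"
  define \<theta> where "\<theta> = (pi/2 - \<phi>)/2"
  have s: "s > 0" using assms by (simp add: s_def)
  have "pi/2 - 2*\<theta> = \<phi>" by (simp add: \<theta>_def field_simps)
  have d1: "s * (1/s) - (Re w / s) * 0 = 1" using s by simp
  have d2: "cos \<theta> * cos \<theta> - (- sin \<theta>) * sin \<theta> = 1" by (simp flip: power2_eq_square)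
  have "tangent_act s (Re w / s) 0 (1/s) (tangent_act (cos \<theta>) (- sin \<theta>) (sin \<theta>) (cos \<theta>) (\<i>, \<i>))
      = (w, cis \<phi>)"
    using tangent_act_rotation[of \<theta>] tangent_act_affine[OF assms]
    by (simp add: s_def \<open>pi/2 - 2*\<theta> = \<phi>\<close>)
  then have "tangent_act (s * cos \<theta> + Re w / s * sin \<theta>) (s * - sin \<theta> + Re w / s * cos \<theta>)
      (0 * cos \<theta> + 1 / s * sin \<theta>) (0 * - sin \<theta> + 1 / s * cos \<theta>) (\<i>, \<i>) = (w, cis \<phi>)"
    by (simp add: tangent_act_compose[OF d1 d2])
  then show ?thesis
    using obtain_normalized_representative[OF unimodular_mult[OF d1 d2]] that by metis
qed

text \<open>At height \<open>Y\<close> a horizontal displacement \<open>x\<close> has hyperbolic length \<open>\<bar>x\<bar> / Y\<close>, so its image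
  under an isometry is short too, both in position and in direction.\<close>
lemma jfactor_horizontal_shift:
  fixes x Y :: real
  assumes det: "A*D - B*C = 1" and Y: "Y > 0" and xY: "2 * \<bar>x\<bar> \<le> Y"
  defines "j1 \<equiv> jfactor C D (\<i> * of_real Y)" and "j2 \<equiv> jfactor C D (of_real x + \<i> * of_real Y)"
  shows "j2 = j1 + of_real (C * x)" and "\<bar>C * x\<bar> \<le> cmod j1 * \<bar>x\<bar> / Y"
    and "cmod j1 / 2 \<le> cmod j2" and "cmod j1 > 0"
proof -
  show j1: "cmod j1 > 0" using jfactor_nonzero[OF det] Y by (simp add: j1_def)
  show j2: "j2 = j1 + of_real (C * x)" by (simp add: j1_def j2_def jfactor_def algebra_simps)
  have "\<bar>C\<bar> * Y \<le> cmod j1"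
    using abs_Im_le_cmod[of j1] Y by (simp add: j1_def jfactor_def abs_mult)
  then have "\<bar>C\<bar> * \<bar>x\<bar> * Y \<le> cmod j1 * \<bar>x\<bar>"
    by (metis mult.commute mult.left_commute mult_left_mono abs_ge_zero)
  then show Cx: "\<bar>C * x\<bar> \<le> cmod j1 * \<bar>x\<bar> / Y"
    using Y by (simp add: abs_mult field_simps)
  have "cmod j1 * \<bar>x\<bar> / Y \<le> cmod j1 / 2"
    using xY j1 Y by (simp add: field_simps mult_left_mono)
  moreover have "cmod j1 - cmod (of_real (C * x) :: complex) \<le> cmod j2"
    unfolding j2 by (metis norm_diff_ineq norm_minus_cancel diff_minus_eq_add)
  then have "cmod j1 - \<bar>C * x\<bar> \<le> cmod j2"
    by (simp only: norm_of_real)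
  ultimately show "cmod j1 / 2 \<le> cmod j2"
    using Cx by linarith
qed

lemma mobius_horizontal_shift:
  fixes x Y :: real
  assumes det: "A*D - B*C = 1" and Y: "Y > 0" and xY: "2 * \<bar>x\<bar> \<le> Y"
  shows "cmod (mobius A B C D (of_real x + \<i> * of_real Y) - mobius A B C D (\<i> * of_real Y))
    \<le> 2 * \<bar>x\<bar> * Im (mobius A B C D (\<i> * of_real Y)) / Y"
proof -
  define j1 where "j1 = jfactor C D (\<i> * of_real Y)"
  define j2 where "j2 = jfactor C D (of_real x + \<i> * of_real Y)"
  note j = jfactor_horizontal_shift[OF det Y xY, folded j1_def j2_def]
  have "mobius A B C D (of_real x + \<i> * of_real Y) - mobius A B C D (\<i> * of_real Y) = of_real x / (j1 * j2)"
    using mobius_diff[OF det, of "\<i> * of_real Y" "of_real x + \<i> * of_real Y"] Y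
    by (simp add: j1_def j2_def)
  moreover have "cmod (of_real x / (j1 * j2)) = \<bar>x\<bar> / (cmod j1 * cmod j2)"
    by (simp add: norm_divide norm_mult)
  moreover have "cmod j2 > 0" using j(3,4) by linarith
  then have "\<bar>x\<bar> / (cmod j1 * cmod j2) \<le> \<bar>x\<bar> / (cmod j1 * (cmod j1 / 2))"
    using j(3,4) by (intro divide_left_mono mult_left_mono) auto
  moreover have "\<bar>x\<bar> / (cmod j1 * (cmod j1 / 2)) = 2 * \<bar>x\<bar> * (Y / (cmod j1)\<^sup>2) / Y"
    using Y j(4) by (simp add: field_simps power2_eq_square)
  ultimately show ?thesis
    using Im_mobius[OF det, of "\<i> * of_real Y"] by (simp add: j1_def)
qed

lemma direction_horizontal_shift:
  fixes x Y :: real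
  assumes det: "A*D - B*C = 1" and Y: "Y > 0" and xY: "2 * \<bar>x\<bar> \<le> Y"
  defines "j1 \<equiv> jfactor C D (\<i> * of_real Y)" and "j2 \<equiv> jfactor C D (of_real x + \<i> * of_real Y)"
  shows "cmod ((cnj j2 / j2) / (cnj j1 / j1) - 1) \<le> 4 * \<bar>x\<bar> / Y"
proof -
  note j = jfactor_horizontal_shift[OF det Y xY, folded j1_def j2_def]
  define s where "s = C * x"
  have "j1 \<noteq> 0" "j2 \<noteq> 0" using j(3,4) by auto
  then have "(cnj j2 / j2) / (cnj j1 / j1) - 1 = (cnj j2 * j1 - j2 * cnj j1) / (j2 * cnj j1)"
    by (simp add: field_simps)
  also have "cnj j2 * j1 - j2 * cnj j1 = of_real s * (j1 - cnj j1)"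
    unfolding j(1) s_def by (simp add: algebra_simps)
  finally have "cmod ((cnj j2 / j2) / (cnj j1 / j1) - 1) = \<bar>s\<bar> * cmod (j1 - cnj j1) / (cmod j2 * cmod j1)"
    by (simp add: norm_divide norm_mult)
  also have "\<dots> \<le> \<bar>s\<bar> * (2 * cmod j1) / ((cmod j1 / 2) * cmod j1)"
    using norm_triangle_ineq4[of j1 "cnj j1"] j(3,4)
    by (intro frac_le mult_left_mono mult_right_mono) auto
  also have "\<dots> = 4 * \<bar>s\<bar> / cmod j1" using j(4) by (simp add: field_simps)
  also have "\<dots> \<le> 4 * (cmod j1 * \<bar>x\<bar> / Y) / cmod j1"
    using j(2,4) unfolding s_def by (intro divide_right_mono mult_left_mono) auto
  also have "\<dots> = 4 * \<bar>x\<bar> / Y" using j(4) by simp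
  finally show ?thesis .
qed

lemma tangent_act_horizontal_shift:
  fixes x Y :: real
  assumes det: "A*D - B*C = 1" and Y: "Y > 0" and xY: "2 * \<bar>x\<bar> \<le> Y" and u: "cmod u = 1"
  defines "p1 \<equiv> tangent_act A B C D (\<i> * of_real Y, u)"
    and "p2 \<equiv> tangent_act A B C D (of_real x + \<i> * of_real Y, u)"
  shows "cmod (fst p2 - fst p1) \<le> 2 * \<bar>x\<bar> * Im (fst p1) / Y"
    and "cmod (snd p2 / snd p1 - 1) \<le> 4 * \<bar>x\<bar> / Y"
proof -
  show "cmod (fst p2 - fst p1) \<le> 2 * \<bar>x\<bar> * Im (fst p1) / Y"
    using mobius_horizontal_shift[OF det Y xY] by (simp add: p1_def p2_def tangent_act_def)
  have "u \<noteq> 0" using u by auto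
  moreover have "jfactor C D (\<i> * of_real Y) \<noteq> 0" "jfactor C D (of_real x + \<i> * of_real Y) \<noteq> 0"
    using jfactor_nonzero[OF det] Y by auto
  ultimately have "snd p2 / snd p1 = (cnj (jfactor C D (of_real x + \<i> * of_real Y)) / jfactor C D (of_real x + \<i> * of_real Y))
      / (cnj (jfactor C D (\<i> * of_real Y)) / jfactor C D (\<i> * of_real Y))"
    by (simp add: p1_def p2_def tangent_act_def field_simps)
  then show "cmod (snd p2 / snd p1 - 1) \<le> 4 * \<bar>x\<bar> / Y"
    using direction_horizontal_shift[OF det Y xY] by simp
qed

lemma exists_height_small_shift:
  fixes x M \<delta> :: real
  assumes "\<delta> > 0" "M > 0"
  shows "\<exists>Y>0. 2 * \<bar>x\<bar> \<le> Y \<and> 4 * \<bar>x\<bar> / Y < \<delta> \<and> 2 * \<bar>x\<bar> * M / Y < \<delta>"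
proof -
  define Y where "Y = 1 + 4 * \<bar>x\<bar> + 4 * \<bar>x\<bar> * ((1 + M) / \<delta>)"
  have "0 \<le> 4 * \<bar>x\<bar> * ((1 + M) / \<delta>)" using assms by simp
  then have "Y > 0" "2 * \<bar>x\<bar> \<le> Y" unfolding Y_def by linarith+
  have "\<delta> * Y = \<delta> + 4 * \<bar>x\<bar> * \<delta> + 4 * \<bar>x\<bar> + 4 * \<bar>x\<bar> * M"
    using assms by (simp add: Y_def field_simps)
  moreover have "0 \<le> \<bar>x\<bar> * \<delta>" "0 \<le> \<bar>x\<bar> * M" using assms by simp_all
  ultimately have "4 * \<bar>x\<bar> < \<delta> * Y" and "2 * \<bar>x\<bar> * M < \<delta> * Y"
    using assms by linarith+
  then show ?thesis
    using \<open>Y > 0\<close> \<open>2 * \<bar>x\<bar> \<le> Y\<close> by (auto simp: divide_less_eq mult.commute)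
qed

section \<open>The action on the coordinates of \<open>M\<close>\<close>

lemma Re_plus_Im_divide:
  assumes "j \<noteq> 0"
  shows "Re v + 2 * Im j * Im (v / j) = Re (v * cnj j / j)"
proof -
  obtain p q where j: "j = Complex p q" by (cases j)
  obtain m n where v: "v = Complex m n" by (cases v)
  have "p\<^sup>2 + q\<^sup>2 \<noteq> 0" using assms j by (auto simp: complex_eq_iff)
  then show ?thesis using j v by (simp add: Im_divide Re_divide field_simps power2_eq_square)
qed

lemma cis_minus_2_Im_Ln:
  assumes "j \<noteq> 0"
  shows "cis (\<phi> - 2 * Im (Ln j)) = cis \<phi> * cnj j / j"
proof -
  have "cis (Arg j) = j / of_real (cmod j)"
    using cis_Arg[OF assms] by (simp add: sgn_div_norm scaleR_conv_of_real divide_inverse mult.commute)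
  moreover have "(cis (Arg j))\<^sup>2 = cis (2 * Arg j)"
    using Complex.DeMoivre[of "Arg j" 2] by simp
  ultimately have "cis (\<phi> - 2 * Arg j) = cis \<phi> / (j / of_real (cmod j))\<^sup>2"
    by (simp add: cis_divide)
  also have "\<dots> = cis \<phi> * (j * cnj j) / (j * j)"
    using complex_norm_square[of j] by (simp add: power_divide power2_eq_square)
  also have "\<dots> = cis \<phi> * cnj j / j"
    using assms by simp
  finally show ?thesis by (simp add: Arg_eq_Im_Ln[OF assms])
qed

text \<open>\<open>Im (Ln j)\<close> is a smooth branch of \<open>arg j\<close> only while \<open>j\<close> avoids the nonpositive reals;
  this is why representatives with \<open>c > 0 \<or> (c = 0 \<and> d > 0)\<close> are used below.\<close>
definition coord_act :: "real \<Rightarrow> real \<Rightarrow> real \<Rightarrow> real \<Rightarrow> complex \<times> real \<times> real \<Rightarrow> complex \<times> real \<times> real" where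
  "coord_act a b c d p =
     (mobius a b c d (fst p), fst (snd p) - 2 * Im (Ln (jfactor c d (fst p))), snd (snd p))"

lemma coord_act_has_vector_derivative:
  assumes det: "a*d - b*c = 1" and nrm: "c > 0 \<or> (c = 0 \<and> d > 0)"
    and \<gamma>: "(\<gamma> has_vector_derivative v) (at s)" and dom: "Im (fst (\<gamma> s)) > 0"
  defines "j \<equiv> jfactor c d (fst (\<gamma> s))"
  shows "((\<lambda>s. coord_act a b c d (\<gamma> s)) has_vector_derivative
     (fst v / j\<^sup>2, fst (snd v) - 2 * Im (fst v * of_real c / j), snd (snd v))) (at s)"
proof -
  have z: "((\<lambda>s. fst (\<gamma> s)) has_vector_derivative fst v) (at s)"
    and \<phi>: "((\<lambda>s. fst (snd (\<gamma> s))) has_real_derivative fst (snd v)) (at s)"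
    and t: "((\<lambda>s. snd (snd (\<gamma> s))) has_vector_derivative snd (snd v)) (at s)"
    using bounded_linear.has_vector_derivative[OF bounded_linear_fst \<gamma>]
      bounded_linear.has_vector_derivative[OF bounded_linear_fst_comp[OF bounded_linear_snd] \<gamma>]
      bounded_linear.has_vector_derivative[OF bounded_linear_snd_comp[OF bounded_linear_snd] \<gamma>]
    by (simp_all add: has_real_derivative_iff_has_vector_derivative o_def)
  have "((\<lambda>s. mobius a b c d (fst (\<gamma> s))) has_vector_derivative fst v / j\<^sup>2) (at s)"
    using field_vector_diff_chain_at[OF z has_field_derivative_mobius[OF det dom]]
    by (simp add: o_def j_def)
  moreover have "(jfactor c d has_field_derivative of_real c) (at (fst (\<gamma> s)))"
    unfolding jfactor_def[abs_def] by (auto intro!: derivative_eq_intros)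
  then have J: "((\<lambda>s. jfactor c d (fst (\<gamma> s))) has_vector_derivative fst v * of_real c) (at s)"
    using field_vector_diff_chain_at[OF z] by (simp add: o_def)
  have "((\<lambda>s. Ln (jfactor c d (fst (\<gamma> s)))) has_vector_derivative fst v * of_real c / j) (at s)"
    using field_vector_diff_chain_at[OF J has_field_derivative_Ln[OF jfactor_not_nonpos_Reals[OF det nrm dom]]]
    by (simp add: o_def j_def divide_inverse)
  then have "((\<lambda>s. Im (Ln (jfactor c d (fst (\<gamma> s))))) has_real_derivative Im (fst v * of_real c / j)) (at s)"
    using bounded_linear.has_vector_derivative[OF bounded_linear_Im]
    by (simp add: has_real_derivative_iff_has_vector_derivative)
  then have "((\<lambda>s. fst (snd (\<gamma> s)) - 2 * Im (Ln (jfactor c d (fst (\<gamma> s))))) has_real_derivative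
      fst (snd v) - 2 * Im (fst v * of_real c / j)) (at s)"
    by (intro DERIV_diff DERIV_cmult \<phi>)
  ultimately show ?thesis
    unfolding coord_act_def fst_conv snd_conv
    by (intro has_vector_derivative_Pair t)
      (simp_all add: has_real_derivative_iff_has_vector_derivative)
qed

lemma Xv_Yv_Tv_combination:
  "A *\<^sub>R Xv (z, \<phi>, t) + B *\<^sub>R Yv (z, \<phi>, t) + E *\<^sub>R Tv =
     ((of_real A + \<i> * of_real B) * of_real (Im z) * cis \<phi>, - A * cos \<phi> + B * sin \<phi>, E)"
  by (simp add: Xv_def Yv_def Tv_def scaleR_conv_of_real algebra_simps)

text \<open>The left-hand side is the derivative from \<open>coord_act_has_vector_derivative\<close>: the lifted
  action preserves the frame.\<close>
lemma coord_act_preserves_frame: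
  fixes A B E \<phi> t :: real
  assumes det: "a*d - b*c = 1" and z: "Im z > 0"
  defines "j \<equiv> jfactor c d z" and "v \<equiv> A *\<^sub>R Xv (z, \<phi>, t) + B *\<^sub>R Yv (z, \<phi>, t) + E *\<^sub>R Tv"
  shows "(fst v / j\<^sup>2, fst (snd v) - 2 * Im (fst v * of_real c / j), snd (snd v)) =
    A *\<^sub>R Xv (coord_act a b c d (z, \<phi>, t)) + B *\<^sub>R Yv (coord_act a b c d (z, \<phi>, t)) + E *\<^sub>R Tv"
proof -
  define w where "w = (of_real A + \<i> * of_real B) * cis \<phi>"
  define \<psi> where "\<psi> = \<phi> - 2 * Im (Ln j)"
  have j: "j \<noteq> 0" using jfactor_nonzero[OF det z] by (simp add: j_def)
  have cis\<psi>: "cis \<psi> = cis \<phi> * cnj j / j"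
    unfolding \<psi>_def by (rule cis_minus_2_Im_Ln[OF j])
  have v: "v = (w * of_real (Im z), - A * cos \<phi> + B * sin \<phi>, E)"
    unfolding v_def Xv_Yv_Tv_combination w_def by (simp add: algebra_simps)
  have "fst v / j\<^sup>2 = (of_real A + \<i> * of_real B) * (of_real (Im z) * (cis \<phi> * cnj j / j) / (j * cnj j))"
    using j by (simp add: v w_def field_simps power2_eq_square)
  also have "\<dots> = (of_real A + \<i> * of_real B) * of_real (Im (mobius a b c d z)) * cis \<psi>"
    using complex_norm_square[of j]
    by (simp add: Im_mobius[OF det] j_def[symmetric] cis\<psi> del: of_real_power)
  finally have "fst v / j\<^sup>2 = (of_real A + \<i> * of_real B) * of_real (Im (mobius a b c d z)) * cis \<psi>" .
  moreover have "fst (snd v) - 2 * Im (fst v * of_real c / j) = - A * cos \<psi> + B * sin \<psi>"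
  proof -
    have vj: "fst v * of_real c / j = of_real (Im j) * (w / j)"
      by (simp add: v j_def Im_jfactor algebra_simps)
    have "Im (fst v * of_real c / j) = Im j * Im (w / j)"
      unfolding vj by (simp del: times_divide_eq_right)
    moreover have "w * cnj j / j = (of_real A + \<i> * of_real B) * cis \<psi>"
      by (simp add: w_def cis\<psi>)
    then have "Re (w * cnj j / j) = A * cos \<psi> - B * sin \<psi>"
      by simp
    ultimately show ?thesis
      using Re_plus_Im_divide[OF j, of w] by (simp add: v w_def)
  qed
  ultimately show ?thesis
    by (simp add: coord_act_def Xv_Yv_Tv_combination v \<psi>_def j_def)
qed

lemma coord_act_pushes_frame:
  assumes det: "a*d - b*c = 1" and nrm: "c > 0 \<or> (c = 0 \<and> d > 0)"
    and \<gamma>: "(\<gamma> has_vector_derivative (A *\<^sub>R Xv (\<gamma> s) + B *\<^sub>R Yv (\<gamma> s) + E *\<^sub>R Tv)) (at s)"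
    and dom: "Im (fst (\<gamma> s)) > 0"
  shows "((\<lambda>s. coord_act a b c d (\<gamma> s)) has_vector_derivative
     (A *\<^sub>R Xv (coord_act a b c d (\<gamma> s)) + B *\<^sub>R Yv (coord_act a b c d (\<gamma> s)) + E *\<^sub>R Tv)) (at s)"
  using coord_act_has_vector_derivative[OF det nrm \<gamma> dom]
    coord_act_preserves_frame[OF det, of "fst (\<gamma> s)" A "fst (snd (\<gamma> s))" "snd (snd (\<gamma> s))" B E] dom
  by (cases "\<gamma> s") simp

lemma has_real_derivative_comp_dderiv:
  assumes "f differentiable (at (\<gamma> s))" and "(\<gamma> has_vector_derivative v) (at s)"
  shows "((f \<circ> \<gamma>) has_real_derivative dderiv f (\<gamma> s) v) (at s)"
proof -
  let ?F = "frechet_derivative f (at (\<gamma> s))"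
  have "((f \<circ> \<gamma>) has_derivative (?F \<circ> (\<lambda>h. h *\<^sub>R v))) (at s)"
    using assms diff_chain_at frechet_derivative_works has_vector_derivative_def by blast
  moreover have "?F \<circ> (\<lambda>h. h *\<^sub>R v) = (*) (?F v)"
    using linear_cmul[OF linear_frechet_derivative[OF assms(1)]] by (auto simp: fun_eq_iff)
  ultimately show ?thesis
    by (simp add: has_field_derivative_def dderiv_def)
qed

lemma vertical_line_has_vector_derivative:
  fixes x t :: real
  assumes "\<epsilon> = 1 \<or> \<epsilon> = -1"
  defines "\<gamma> \<equiv> \<lambda>s. (of_real x + \<i> * of_real (exp s), \<epsilon> * (pi/2), t)"
  shows "(\<gamma> has_vector_derivative (\<epsilon> *\<^sub>R Xv (\<gamma> s) + 0 *\<^sub>R Yv (\<gamma> s) + 0 *\<^sub>R Tv)) (at s)"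
proof -
  have "(\<gamma> has_vector_derivative (\<i> * of_real (exp s), 0, 0)) (at s)"
    unfolding \<gamma>_def
    by (auto intro!: derivative_eq_intros has_vector_derivative_Pair simp: prod_eq_iff)
  moreover have "\<epsilon> *\<^sub>R Xv (\<gamma> s) + 0 *\<^sub>R Yv (\<gamma> s) + 0 *\<^sub>R Tv = (\<i> * of_real (exp s), 0, 0)"
    using assms(1) by (auto simp: \<gamma>_def Xv_def Tv_def complex_eq_iff)
  ultimately show ?thesis by simp
qed

lemma sin_2_arctan: "sin (2 * arctan u) = 2 * u / (1 + u\<^sup>2)"
proof -
  have p: "1 + u\<^sup>2 > 0" by (simp add: add_pos_nonneg)
  have "sin (2 * arctan u) = 2 * sin (arctan u) * cos (arctan u)" by (rule sin_double)
  also have "\<dots> = 2 * u / (1 + u\<^sup>2)"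
    using p by (simp add: sin_arctan cos_arctan field_simps power2_eq_square del: real_sqrt_mult_self)
      (metis less_numeral_extra(3) p power2_eq_square real_sqrt_pow2 less_imp_le)
  finally show ?thesis .
qed

text \<open>The base point runs along the unit semicircle, perpendicularly to the unit vector
  \<open>cis \<alpha>\<close>, i.e.\ along \<open>Yv\<close>; the angle \<open>\<alpha>\<close> solves \<open>\<alpha>' = sin \<alpha>\<close>.\<close>
lemma semicircle_has_vector_derivative:
  fixes t :: real
  defines "\<alpha> \<equiv> \<lambda>s. 2 * arctan (exp s)"
  defines "\<gamma> \<equiv> \<lambda>s. (cis (\<alpha> s), \<alpha> s, t - s)"
  shows "(\<gamma> has_vector_derivative (0 *\<^sub>R Xv (\<gamma> s) + 1 *\<^sub>R Yv (\<gamma> s) + (-1) *\<^sub>R Tv)) (at s)"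
proof -
  have "(\<alpha> has_real_derivative 2 * (inverse (1 + (exp s)\<^sup>2) * exp s)) (at s)"
    unfolding \<alpha>_def by (auto intro!: derivative_eq_intros)
  moreover have "2 * (inverse (1 + (exp s)\<^sup>2) * exp s) = sin (\<alpha> s)"
    by (simp add: \<alpha>_def sin_2_arctan field_simps)
  ultimately have \<alpha>': "(\<alpha> has_real_derivative sin (\<alpha> s)) (at s)"
    by simp
  then have "(\<alpha> has_derivative (*) (sin (\<alpha> s))) (at s)"
    by (simp add: has_field_derivative_def)
  from has_derivative_cis[OF this]
  have "((\<lambda>s. cis (\<alpha> s)) has_vector_derivative (sin (\<alpha> s) *\<^sub>R (\<i> * cis (\<alpha> s)))) (at s)"
    by (simp add: has_vector_derivative_def scaleR_scaleR mult.commute)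
  moreover have "((\<lambda>s. t - s) has_vector_derivative (-1)) (at s)"
    by (auto intro!: derivative_eq_intros simp flip: has_real_derivative_iff_has_vector_derivative)
  ultimately have "(\<gamma> has_vector_derivative (sin (\<alpha> s) *\<^sub>R (\<i> * cis (\<alpha> s)), sin (\<alpha> s), -1)) (at s)"
    unfolding \<gamma>_def using \<alpha>'
    by (intro has_vector_derivative_Pair) (simp_all add: has_real_derivative_iff_has_vector_derivative)
  then show ?thesis
    by (simp add: \<gamma>_def Yv_def Tv_def scaleR_conv_of_real mult.assoc)
qed

lemma Im_cis_2_arctan_exp_pos: "Im (cis (2 * arctan (exp s))) > 0"
  using arctan_ubound[of "exp s"] zero_less_arctan_iff[of "exp s"] by (simp add: sin_gt_zero)

section \<open>Cocompact Fuchsian groups\<close>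

lemma cocompact_fuchsian_det:
  assumes "cocompact_fuchsian \<Gamma>" "g \<in> \<Gamma>"
  shows "g$1$1 * g$2$2 - g$1$2 * g$2$1 = 1"
proof -
  have "\<Gamma> \<subseteq> SL2" using assms(1) unfolding cocompact_fuchsian_def by blast
  with assms(2) have "det g = 1" by (auto simp: SL2_def)
  then show ?thesis by (simp add: det_2)
qed

lemma cocompact_fuchsian_fundamental_set:
  assumes "cocompact_fuchsian \<Gamma>"
  obtains K m M where "compact K" "\<And>z. Im z > 0 \<Longrightarrow> \<exists>g\<in>\<Gamma>. mob g z \<in> K"
    "m > 0" "M > 0" "\<And>w. w \<in> K \<Longrightarrow> m \<le> Im w \<and> Im w \<le> M"
proof -
  obtain K where K: "compact K" "K \<subseteq> upper_half" and cov: "\<And>z. Im z > 0 \<Longrightarrow> \<exists>g\<in>\<Gamma>. mob g z \<in> K"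
    using assms unfolding cocompact_fuchsian_def upper_half_def by (metis mem_Collect_eq)
  have "compact (Im ` K)"
    by (intro compact_continuous_image continuous_intros K(1))
  moreover have "Im ` K \<noteq> {}"
    using cov[of \<i>] by auto
  ultimately obtain m M where m: "m \<in> Im ` K" and mM: "\<And>w. w \<in> K \<Longrightarrow> m \<le> Im w \<and> Im w \<le> M"
    using compact_attains_inf compact_attains_sup by (metis image_eqI)
  have "m > 0" using m K(2) by (auto simp: upper_half_def)
  moreover have "Im w \<le> max M 1" if "w \<in> K" for w
    using mM[OF that] by linarith
  ultimately show ?thesis
    using that[OF K(1) cov, of m "max M 1"] mM by fastforce
qed

lemma compact_thickening_in_upper_half:
  assumes "compact K" "\<And>w. w \<in> K \<Longrightarrow> m \<le> Im w" "m > 0"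
  defines "K' \<equiv> {w + v |w v. w \<in> K \<and> v \<in> cball 0 (m/2)}"
  shows "compact K'" and "\<And>w. w \<in> K' \<Longrightarrow> Im w > 0"
proof -
  show "compact K'" unfolding K'_def by (intro compact_sums assms(1) compact_cball)
  fix w assume "w \<in> K'"
  then obtain w0 v where "w = w0 + v" "w0 \<in> K" "cmod v \<le> m/2" by (auto simp: K'_def)
  moreover have "\<bar>Im v\<bar> \<le> cmod v" by (rule abs_Im_le_cmod)
  ultimately show "Im w > 0" using assms(2,3) by fastforce
qed

section \<open>Solutions of \<open>d\<^sub>A f = 0\<close>\<close>

lemma mem_Mdom_iff: "p \<in> Mdom \<longleftrightarrow> Im (fst p) > 0"
  by (cases p) (auto simp: Mdom_def)

lemma open_Mdom: "open Mdom"
proof -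
  have "Mdom = {p. 0 < Im (fst p)}" by (auto simp: mem_Mdom_iff)
  moreover have "open {p :: complex \<times> real \<times> real. 0 < Im (fst p)}"
    by (intro open_Collect_less continuous_intros)
  ultimately show ?thesis by simp
qed

lemma cis_Arg_unit:
  assumes "cmod u = 1"
  shows "cis (Arg u) = u"
proof -
  have "u \<noteq> 0" using assms by auto
  then show ?thesis using cis_Arg[of u] assms by (simp add: sgn_div_norm)
qed

lemma cis_Arg_add_Arg_divide:
  assumes "cmod u1 = 1" "cmod u2 = 1"
  shows "cis (Arg u1 + Arg (u2 / u1)) = u2"
proof -
  have "u1 \<noteq> 0" using assms(1) by auto
  then show ?thesis using assms by (simp add: cis_mult[symmetric] cis_Arg_unit norm_divide)
qed

locale dA_closed =
  fixes \<Gamma> :: "(real^2^2) set" and f :: "complex \<times> real \<times> real \<Rightarrow> real"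
  assumes cocompact: "cocompact_fuchsian \<Gamma>"
    and smooth: "Cinf_on Mdom f"
    and invariant: "Gamma_invariant \<Gamma> f"
    and dA_X: "\<forall>p\<in>Mdom. dderiv f p (Xv p) + tanh (snd (snd p)) * dderiv f p Zv = 0"
    and dA_Y: "\<forall>p\<in>Mdom. dderiv f p (Yv p) - dderiv f p Tv = 0"
begin

lemma continuous_on_f: "continuous_on Mdom f"
  using smooth unfolding Cinf_on_def by (metis Ck_on.simps(1))

lemma differentiable_f: "p \<in> Mdom \<Longrightarrow> f differentiable (at p)"
  using smooth open_Mdom differentiable_on_eq_differentiable_at
  unfolding Cinf_on_def by (metis Ck_on.simps(2))

text \<open>Since \<open>tanh 0 = 0\<close>, the two equations say that \<open>f\<close> is constant along \<open>Yv - Tv\<close>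
  everywhere and along \<open>Xv\<close> on the slice \<open>t = 0\<close>.\<close>
lemma constant_along_characteristic:
  assumes dom: "\<And>s. \<gamma> s \<in> Mdom"
    and \<gamma>: "\<And>s. (\<gamma> has_vector_derivative (A *\<^sub>R Xv (\<gamma> s) + B *\<^sub>R Yv (\<gamma> s) + (-B) *\<^sub>R Tv)) (at s)"
    and slice: "A = 0 \<or> (\<forall>s. snd (snd (\<gamma> s)) = 0)"
  shows "f (\<gamma> a) = f (\<gamma> b)"
proof -
  have "((f \<circ> \<gamma>) has_real_derivative 0) (at s)" for s
  proof -
    let ?D = "frechet_derivative f (at (\<gamma> s))"
    have lin: "linear ?D"
      using linear_frechet_derivative differentiable_f[OF dom] by blast
    have "dderiv f (\<gamma> s) (A *\<^sub>R Xv (\<gamma> s) + B *\<^sub>R Yv (\<gamma> s) + (-B) *\<^sub>R Tv)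
        = A * dderiv f (\<gamma> s) (Xv (\<gamma> s)) + B * (dderiv f (\<gamma> s) (Yv (\<gamma> s)) - dderiv f (\<gamma> s) Tv)"
      unfolding dderiv_def by (simp add: linear_add[OF lin] linear_diff[OF lin] linear_cmul[OF lin] algebra_simps)
    also have "\<dots> = 0"
      using dA_X dA_Y dom[of s] slice by auto
    finally show ?thesis
      using has_real_derivative_comp_dderiv[OF differentiable_f[OF dom[of s]] \<gamma>[of s]] by simp
  qed
  then show ?thesis
    using DERIV_isconst_all[of "f \<circ> \<gamma>" a b] by simp
qed

lemma f_cis_cong:
  assumes "Im z > 0" "cis \<phi>' = cis \<phi>"
  shows "f (z, \<phi>', t) = f (z, \<phi>, t)"
proof -
  have "mat 1 \<in> \<Gamma>" using cocompact by (simp add: cocompact_fuchsian_def)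
  moreover have "mob (mat 1) z = z" "jfac (mat 1) z = 1"
    by (simp_all add: mob_def jfac_def mat_def)
  ultimately show ?thesis
    using invariant assms unfolding Gamma_invariant_def by (metis complex_cnj_one div_by_1 mult_1_right)
qed

lemma f_Arg_cis: "Im z > 0 \<Longrightarrow> f (z, Arg (cis \<phi>), t) = f (z, \<phi>, t)"
  by (rule f_cis_cong) (simp_all add: cis_Arg_unit)

definition f_tangent :: "complex \<times> complex \<Rightarrow> real" where
  "f_tangent p = f (fst p, Arg (snd p), 0)"

lemma f_coord_act:
  assumes "a*d - b*c = 1" "Im z > 0"
  shows "f (coord_act a b c d (z, \<phi>, t)) =
    f (mobius a b c d z, Arg (cis \<phi> * cnj (jfactor c d z) / jfactor c d z), t)"
  using f_Arg_cis[OF Im_mobius_pos[OF assms], of "\<phi> - 2 * Im (Ln (jfactor c d z))" t]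
  by (simp add: coord_act_def cis_minus_2_Im_Ln[OF jfactor_nonzero[OF assms]])

lemma f_tangent_geodesic_invariant:
  assumes det: "a*d - b*c = 1" and \<epsilon>: "\<epsilon> = 1 \<or> \<epsilon> = -1" and "Y1 > 0" "Y2 > 0"
  shows "f_tangent (tangent_act a b c d (of_real x + \<i> * of_real Y1, \<i> * of_real \<epsilon>)) =
         f_tangent (tangent_act a b c d (of_real x + \<i> * of_real Y2, \<i> * of_real \<epsilon>))"
proof -
  obtain a' b' c' d' where det': "a'*d' - b'*c' = 1" and nrm: "c' > 0 \<or> (c' = 0 \<and> d' > 0)"
    and eq: "tangent_act a' b' c' d' = tangent_act a b c d"
    by (rule obtain_normalized_representative[OF det])
  define \<phi> where "\<phi> = \<epsilon> * (pi/2)"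
  have cis\<phi>: "cis \<phi> = \<i> * of_real \<epsilon>" using \<epsilon> by (auto simp: \<phi>_def complex_eq_iff)
  define \<gamma> where "\<gamma> = (\<lambda>s::real. (of_real x + \<i> * of_real (exp s), \<phi>, 0::real))"
  let ?L = "\<lambda>s. coord_act a' b' c' d' (\<gamma> s)"
  have "f (?L (ln Y1)) = f (?L (ln Y2))"
  proof (rule constant_along_characteristic[where A = \<epsilon> and B = 0])
    show "?L s \<in> Mdom" for s
      using Im_mobius_pos[OF det'] by (simp add: mem_Mdom_iff coord_act_def \<gamma>_def)
    show "(?L has_vector_derivative (\<epsilon> *\<^sub>R Xv (?L s) + 0 *\<^sub>R Yv (?L s) + (-0) *\<^sub>R Tv)) (at s)" for s
      using coord_act_pushes_frame[OF det' nrm vertical_line_has_vector_derivative[OF \<epsilon>]]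
      by (simp add: \<gamma>_def \<phi>_def)
    show "\<epsilon> = 0 \<or> (\<forall>s. snd (snd (?L s)) = 0)"
      by (simp add: coord_act_def \<gamma>_def)
  qed
  moreover have "f (?L (ln Y)) = f_tangent (tangent_act a b c d (of_real x + \<i> * of_real Y, \<i> * of_real \<epsilon>))"
    if "Y > 0" for Y
  proof -
    let ?z = "of_real x + \<i> * of_real Y"
    have "?L (ln Y) = coord_act a' b' c' d' (?z, \<phi>, 0)"
      using that by (simp add: \<gamma>_def)
    then have "f (?L (ln Y)) = f_tangent (tangent_act a' b' c' d' (?z, \<i> * of_real \<epsilon>))"
      using f_coord_act[OF det', of ?z \<phi> 0] that unfolding f_tangent_def tangent_act_def cis\<phi> by simp
    then show ?thesis by (simp add: eq)
  qed
  ultimately show ?thesis using assms(3,4) by simp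
qed

lemma f_tangent_Gamma_invariant:
  assumes g: "g \<in> \<Gamma>" and "Im w > 0" and u: "cmod u = 1"
  shows "f_tangent (tangent_act (g$1$1) (g$1$2) (g$2$1) (g$2$2) (w, u)) = f_tangent (w, u)"
proof -
  let ?j = "jfac g w"
  have "?j \<noteq> 0"
    using jfactor_nonzero[OF cocompact_fuchsian_det[OF cocompact g] \<open>Im w > 0\<close>]
    by (simp add: jfac_eq_jfactor)
  then have "cis (Arg (u * cnj ?j / ?j)) = cis (Arg u) * cnj ?j / ?j"
    using u by (simp add: cis_Arg_unit norm_divide norm_mult)
  then have "f (mob g w, Arg (u * cnj ?j / ?j), 0) = f (w, Arg u, 0)"
    using invariant g \<open>Im w > 0\<close> unfolding Gamma_invariant_def by blast
  then show ?thesis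
    by (simp add: f_tangent_def tangent_act_def mob_eq_mobius jfac_eq_jfactor)
qed

lemma f_slice_uniformly_continuous_near:
  assumes K: "compact K" "\<And>w. w \<in> K \<Longrightarrow> m \<le> Im w" "m > 0" and "e > 0"
  obtains \<delta> where "\<delta> > 0" "\<delta> \<le> m/2"
    "\<And>w1 w2 \<phi>1 \<phi>2. w1 \<in> K \<Longrightarrow> \<bar>\<phi>1\<bar> \<le> pi \<Longrightarrow> cmod (w2 - w1) < \<delta> \<Longrightarrow> \<bar>\<phi>2 - \<phi>1\<bar> < \<delta> \<Longrightarrow>
       \<bar>f (w2, \<phi>2, 0) - f (w1, \<phi>1, 0)\<bar> < e"
proof -
  define K' where "K' = {w + v |w v. w \<in> K \<and> v \<in> cball 0 (m/2)}"
  note K' = compact_thickening_in_upper_half[OF K, folded K'_def]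
  define S where "S = K' \<times> {-2*pi..2*pi} \<times> {0::real}"
  have "compact S" unfolding S_def by (intro compact_Times K'(1) compact_Icc compact_sing)
  moreover have "S \<subseteq> Mdom" using K'(2) by (auto simp: S_def mem_Mdom_iff)
  ultimately have "uniformly_continuous_on S f"
    by (intro compact_uniformly_continuous continuous_on_subset[OF continuous_on_f])
  then obtain \<delta>0 where "\<delta>0 > 0" and \<delta>0: "\<And>p q. p \<in> S \<Longrightarrow> q \<in> S \<Longrightarrow> dist q p < \<delta>0 \<Longrightarrow> \<bar>f q - f p\<bar> < e"
    using \<open>e > 0\<close> unfolding uniformly_continuous_on_def dist_real_def by metis
  show ?thesis
  proof (rule that[of "min (\<delta>0/2) (min (m/2) pi)"])
    fix w1 w2 \<phi>1 \<phi>2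
    assume w1: "w1 \<in> K" and \<phi>1: "\<bar>\<phi>1\<bar> \<le> pi"
      and close: "cmod (w2 - w1) < min (\<delta>0/2) (min (m/2) pi)" "\<bar>\<phi>2 - \<phi>1\<bar> < min (\<delta>0/2) (min (m/2) pi)"
    have "w2 - w1 \<in> cball 0 (m/2)" "0 \<in> cball 0 (m/2)"
      using close(1) \<open>m > 0\<close> by auto
    moreover have "w1 = w1 + 0" "w2 = w1 + (w2 - w1)" by simp_all
    ultimately have "w1 \<in> K'" "w2 \<in> K'"
      using w1 unfolding K'_def by blast+
    then have "(w1, \<phi>1, 0) \<in> S" "(w2, \<phi>2, 0) \<in> S"
      using \<phi>1 close(2) pi_gt_zero by (auto simp: S_def)
    moreover have "dist (w2, \<phi>2, 0::real) (w1, \<phi>1, 0) \<le> cmod (w2 - w1) + \<bar>\<phi>2 - \<phi>1\<bar>"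
      using dist_triangle[of "(w2, \<phi>2, 0::real)" "(w1, \<phi>1, 0)" "(w1, \<phi>2, 0)"]
      by (simp add: dist_Pair_Pair dist_norm dist_real_def)
    ultimately show "\<bar>f (w2, \<phi>2, 0) - f (w1, \<phi>1, 0)\<bar> < e"
      using \<delta>0 close by fastforce
  qed (use \<open>\<delta>0 > 0\<close> \<open>m > 0\<close> in auto)
qed

lemma f_tangent_uniformly_continuous_near:
  assumes K: "compact K" "\<And>w. w \<in> K \<Longrightarrow> m \<le> Im w" "m > 0" and "e > 0"
  obtains \<delta> where "\<delta> > 0"
    "\<And>w1 w2 u1 u2. w1 \<in> K \<Longrightarrow> cmod u1 = 1 \<Longrightarrow> cmod u2 = 1 \<Longrightarrow>
       cmod (w2 - w1) < \<delta> \<Longrightarrow> cmod (u2 / u1 - 1) < \<delta> \<Longrightarrow>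
       \<bar>f_tangent (w2, u2) - f_tangent (w1, u1)\<bar> < e"
proof -
  obtain \<delta> where "\<delta> > 0" "\<delta> \<le> m/2" and \<delta>: "\<And>w1 w2 \<phi>1 \<phi>2. w1 \<in> K \<Longrightarrow> \<bar>\<phi>1\<bar> \<le> pi \<Longrightarrow>
      cmod (w2 - w1) < \<delta> \<Longrightarrow> \<bar>\<phi>2 - \<phi>1\<bar> < \<delta> \<Longrightarrow> \<bar>f (w2, \<phi>2, 0) - f (w1, \<phi>1, 0)\<bar> < e"
    using f_slice_uniformly_continuous_near[OF K \<open>e > 0\<close>] by blast
  have "isCont Arg 1" by (rule continuous_at_Arg) (auto simp: complex_nonpos_Reals_iff)
  then obtain \<delta>' where "\<delta>' > 0" and \<delta>': "\<And>v. dist v 1 < \<delta>' \<Longrightarrow> \<bar>Arg v\<bar> < \<delta>"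
    using \<open>\<delta> > 0\<close> unfolding continuous_at_eps_delta dist_real_def by (metis Arg_1 diff_zero)
  show ?thesis
  proof (rule that[of "min \<delta> \<delta>'"])
    fix w1 w2 u1 u2
    assume w1: "w1 \<in> K" and u: "cmod u1 = 1" "cmod u2 = 1"
      and close: "cmod (w2 - w1) < min \<delta> \<delta>'" "cmod (u2 / u1 - 1) < min \<delta> \<delta>'"
    have "Im w2 > 0"
      using K(2)[OF w1] abs_Im_le_cmod[of "w2 - w1"] close(1) \<open>\<delta> \<le> m/2\<close> by auto
    then have "f (w2, Arg u1 + Arg (u2 / u1), 0) = f_tangent (w2, u2)"
      using f_cis_cong cis_Arg_add_Arg_divide[OF u] cis_Arg_unit[OF u(2)] by (simp add: f_tangent_def)
    moreover have "\<bar>Arg u1\<bar> \<le> pi" using Arg_bounded[of u1] by auto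
    moreover have "\<bar>(Arg u1 + Arg (u2 / u1)) - Arg u1\<bar> < \<delta>"
      using \<delta>' close(2) by (simp add: dist_norm)
    ultimately show "\<bar>f_tangent (w2, u2) - f_tangent (w1, u1)\<bar> < e"
      using \<delta>[OF w1, of "Arg u1" w2 "Arg u1 + Arg (u2 / u1)"] close(1) by (simp add: f_tangent_def)
  qed (use \<open>\<delta> > 0\<close> \<open>\<delta>' > 0\<close> in auto)
qed

lemma Gamma_reduction:
  assumes det: "a*d - b*c = 1" and "Im z0 > 0" and cover: "\<And>z. Im z > 0 \<Longrightarrow> \<exists>g\<in>\<Gamma>. mob g z \<in> K"
  shows "\<exists>A B C D. A*D - B*C = 1 \<and> mobius A B C D z0 \<in> K \<and>
    (\<forall>z u. Im z > 0 \<longrightarrow> cmod u = 1 \<longrightarrow>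
       f_tangent (tangent_act A B C D (z, u)) = f_tangent (tangent_act a b c d (z, u)))"
proof -
  obtain g where g: "g \<in> \<Gamma>" "mob g (mobius a b c d z0) \<in> K"
    using cover Im_mobius_pos[OF det \<open>Im z0 > 0\<close>] by blast
  define p q r t where "p = g$1$1" "q = g$1$2" "r = g$2$1" "t = g$2$2"
  have det_g: "p*t - q*r = 1"
    using cocompact_fuchsian_det[OF cocompact g(1)] by (simp add: p_q_r_t_def)
  have compose: "tangent_act (p*a + q*c) (p*b + q*d) (r*a + t*c) (r*b + t*d) (z, u) =
      tangent_act p q r t (tangent_act a b c d (z, u))" if "Im z > 0" for z u
    using tangent_act_compose[OF det_g det that] by simp
  have "mobius (p*a + q*c) (p*b + q*d) (r*a + t*c) (r*b + t*d) z0 \<in> K"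
    using g(2) compose[OF \<open>Im z0 > 0\<close>, of 1]
    by (simp add: tangent_act_def mob_eq_mobius p_q_r_t_def)
  moreover have "f_tangent (tangent_act (p*a + q*c) (p*b + q*d) (r*a + t*c) (r*b + t*d) (z, u)) =
      f_tangent (tangent_act a b c d (z, u))" if z: "Im z > 0" and u: "cmod u = 1" for z u
  proof -
    obtain w u' where wu: "tangent_act a b c d (z, u) = (w, u')" by fastforce
    have "Im w > 0" "cmod u' = 1"
      using Im_mobius_pos[OF det z] norm_snd_tangent_act[OF det z, of u] u wu
      by (auto simp: tangent_act_def)
    then show ?thesis
      using f_tangent_Gamma_invariant[OF g(1)] compose[OF z] wu by (simp add: p_q_r_t_def)
  qed
  ultimately show ?thesis
    using unimodular_mult[OF det_g det] by blast
qed

text \<open>Hopf's argument: far up the geodesic the two frames are close, and after moving into the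
  compact set \<open>K\<close> by \<open>\<Gamma>\<close> uniform continuity applies.\<close>
lemma f_tangent_horocycle_invariant:
  assumes det: "a*d - b*c = 1" and \<epsilon>: "\<epsilon> = 1 \<or> \<epsilon> = -1"
  shows "f_tangent (tangent_act a b c d (of_real x + \<i>, \<i> * of_real \<epsilon>)) =
         f_tangent (tangent_act a b c d (\<i>, \<i> * of_real \<epsilon>))" (is "?l = ?r")
proof -
  let ?u = "\<i> * of_real \<epsilon>"
  have u: "cmod ?u = 1" using \<epsilon> by auto
  obtain K m M where K: "compact K" and cover: "\<And>z. Im z > 0 \<Longrightarrow> \<exists>g\<in>\<Gamma>. mob g z \<in> K"
    and "m > 0" "M > 0" and bounds: "\<And>w. w \<in> K \<Longrightarrow> m \<le> Im w \<and> Im w \<le> M"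
    using cocompact_fuchsian_fundamental_set[OF cocompact] by blast
  have "\<bar>?l - ?r\<bar> < e" if "e > 0" for e
  proof -
    obtain \<delta> where "\<delta> > 0" and uc: "\<And>w1 w2 u1 u2. w1 \<in> K \<Longrightarrow> cmod u1 = 1 \<Longrightarrow> cmod u2 = 1 \<Longrightarrow>
        cmod (w2 - w1) < \<delta> \<Longrightarrow> cmod (u2 / u1 - 1) < \<delta> \<Longrightarrow>
        \<bar>f_tangent (w2, u2) - f_tangent (w1, u1)\<bar> < e"
      using f_tangent_uniformly_continuous_near[OF K, of m e] bounds \<open>m > 0\<close> \<open>e > 0\<close> by blast
    obtain Y where Y: "Y > 0" "2 * \<bar>x\<bar> \<le> Y" and small: "4 * \<bar>x\<bar> / Y < \<delta>" "2 * \<bar>x\<bar> * M / Y < \<delta>"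
      using exists_height_small_shift[OF \<open>\<delta> > 0\<close> \<open>M > 0\<close>] by blast
    have "Im (\<i> * of_real Y) > 0" using Y by simp
    then obtain A B C D where det': "A*D - B*C = 1" and inK: "mobius A B C D (\<i> * of_real Y) \<in> K"
      and transfer: "\<And>z u. Im z > 0 \<Longrightarrow> cmod u = 1 \<Longrightarrow>
         f_tangent (tangent_act A B C D (z, u)) = f_tangent (tangent_act a b c d (z, u))"
      using Gamma_reduction[OF det _ cover] by blast
    define p1 where "p1 = tangent_act A B C D (\<i> * of_real Y, ?u)"
    define p2 where "p2 = tangent_act A B C D (of_real x + \<i> * of_real Y, ?u)"
    note shift = tangent_act_horizontal_shift[OF det' Y u, folded p1_def p2_def]
    have "?l = f_tangent p2" "?r = f_tangent p1"
      using f_tangent_geodesic_invariant[OF det \<epsilon>, of 1 Y x] f_tangent_geodesic_invariant[OF det \<epsilon>, of 1 Y 0]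
        transfer[OF _ u] Y by (simp_all add: p1_def p2_def)
    moreover have "fst p1 \<in> K" "cmod (snd p1) = 1" "cmod (snd p2) = 1"
      using inK norm_snd_tangent_act[OF det'] u Y by (simp_all add: p1_def p2_def tangent_act_def)
    moreover have "2 * \<bar>x\<bar> * Im (fst p1) / Y \<le> 2 * \<bar>x\<bar> * M / Y"
      using bounds[OF \<open>fst p1 \<in> K\<close>] Y by (intro divide_right_mono mult_left_mono) auto
    then have "cmod (fst p2 - fst p1) < \<delta>" "cmod (snd p2 / snd p1 - 1) < \<delta>"
      using shift small by linarith+
    ultimately show ?thesis
      using uc[of "fst p1" "snd p1" "snd p2" "fst p2"] by simp
  qed
  then show ?thesis
    by (metis less_irrefl zero_less_abs_iff right_minus_eq)
qed

definition f_frame :: "real \<Rightarrow> real \<Rightarrow> real \<Rightarrow> real \<Rightarrow> real" where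
  "f_frame a b c d = f_tangent (tangent_act a b c d (\<i>, \<i>))"

lemma f_frame_mult:
  assumes "a*d - b*c = 1" "a'*d' - b'*c' = 1"
  shows "f_frame (a*a' + b*c') (a*b' + b*d') (c*a' + d*c') (c*b' + d*d') =
    f_tangent (tangent_act a b c d (tangent_act a' b' c' d' (\<i>, \<i>)))"
  using tangent_act_compose[OF assms, of \<i> \<i>] by (simp add: f_frame_def)

lemma f_frame_mult_upper:
  assumes det: "a*d - b*c = 1"
  shows "f_frame a (a*x + b) c (c*x + d) = f_frame a b c d"
proof -
  have "f_frame a (a*x + b) c (c*x + d) = f_tangent (tangent_act a b c d (tangent_act 1 x 0 1 (\<i>, \<i>)))"
    using f_frame_mult[OF det, of 1 1 x 0] by simp
  also have "tangent_act 1 x 0 1 (\<i>, \<i>) = (of_real x + \<i>, \<i> * of_real 1)"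
    by (simp add: tangent_act_def mobius_def jfactor_def)
  also have "f_tangent (tangent_act a b c d \<dots>) = f_frame a b c d"
    using f_tangent_horocycle_invariant[OF det, of 1 x] by (simp add: f_frame_def)
  finally show ?thesis .
qed

lemma f_frame_mult_diagonal:
  assumes det: "a*d - b*c = 1" and "l > 0"
  shows "f_frame (a*l) (b/l) (c*l) (d/l) = f_frame a b c d"
proof -
  have "f_frame (a*l) (b/l) (c*l) (d/l) = f_tangent (tangent_act a b c d (tangent_act l 0 0 (1/l) (\<i>, \<i>)))"
    using f_frame_mult[OF det, of l "1/l" 0 0] \<open>l > 0\<close> by simp
  also have "tangent_act l 0 0 (1/l) (\<i>, \<i>) = (of_real 0 + \<i> * of_real (l*l), \<i> * of_real 1)"
    using \<open>l > 0\<close> by (simp add: tangent_act_def mobius_def jfactor_def)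
  also have "f_tangent (tangent_act a b c d \<dots>) = f_tangent (tangent_act a b c d (of_real 0 + \<i> * of_real 1, \<i> * of_real 1))"
    using f_tangent_geodesic_invariant[OF det, of 1 "l*l" 1 0] \<open>l > 0\<close> by simp
  finally show ?thesis by (simp add: f_frame_def)
qed

text \<open>The lower unipotent matrix is the upper one conjugated by the rotation by \<open>pi/2\<close>, which
  maps \<open>(\<i>, -\<i>)\<close> to \<open>(\<i>, \<i>)\<close>; hence the case \<open>\<epsilon> = -1\<close> of horocycle invariance.\<close>
lemma f_frame_mult_lower:
  assumes det: "a*d - b*c = 1"
  shows "f_frame (a + b*x) b (c + d*x) d = f_frame a b c d"
proof -
  have rot: "0 * 0 - (-1) * 1 = (1::real)" by simp
  have "f_frame (a + b*x) b (c + d*x) d = f_tangent (tangent_act a b c d (tangent_act 1 0 x 1 (\<i>, \<i>)))"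
    using f_frame_mult[OF det, of 1 1 0 x] by (simp add: algebra_simps)
  also have "tangent_act 1 0 x 1 (\<i>, \<i>) = tangent_act 0 (-1) 1 0 (tangent_act 1 (-x) 0 1 (\<i>, -\<i>))"
  proof -
    have "of_real x * \<i> + 1 \<noteq> 0" "\<i> - of_real x \<noteq> 0" by (simp_all add: complex_eq_iff)
    then show ?thesis
      by (simp add: tangent_act_def mobius_def jfactor_def field_simps)
  qed
  also have "tangent_act a b c d \<dots> = tangent_act b (-a) d (-c) (tangent_act 1 (-x) 0 1 (\<i>, -\<i>))"
    using tangent_act_compose[OF det rot, of "of_real (-x) + \<i>" "\<i> * of_real (-1)"]
    by (simp add: tangent_act_def mobius_def jfactor_def)
  also have "tangent_act 1 (-x) 0 1 (\<i>, -\<i>) = (of_real (-x) + \<i>, \<i> * of_real (-1))"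
    by (simp add: tangent_act_def mobius_def jfactor_def)
  also have "f_tangent (tangent_act b (-a) d (-c) \<dots>) = f_tangent (tangent_act b (-a) d (-c) (\<i>, \<i> * of_real (-1)))"
    by (rule f_tangent_horocycle_invariant) (use det in auto)
  also have "\<dots> = f_tangent (tangent_act a b c d (tangent_act 0 (-1) 1 0 (\<i>, -\<i>)))"
    using tangent_act_compose[OF det rot, of \<i> "-\<i>"] by simp
  also have "tangent_act 0 (-1) 1 0 (\<i>, -\<i>) = (\<i>, \<i>)"
    by (simp add: tangent_act_def mobius_def jfactor_def)
  finally show ?thesis by (simp add: f_frame_def)
qed

lemma f_frame_uminus: "f_frame (-a) (-b) (-c) (-d) = f_frame a b c d"
  by (simp add: f_frame_def tangent_act_uminus)

text \<open>For \<open>a > 0\<close> the matrix is lower unipotent times diagonal times upper unipotent; \<open>-1\<close>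
  handles \<open>a < 0\<close>, and one more lower unipotent factor the case \<open>a = 0\<close>.\<close>
lemma f_frame_constant:
  assumes det: "a*d - b*c = 1"
  shows "f_frame a b c d = f_frame 1 0 0 1"
proof -
  have pos: "f_frame a b c d = f_frame 1 0 0 1" if det: "a*d - b*c = 1" and "a > 0" for a b c d
  proof -
    have "a*(b/a) + 0 = b" "c*(b/a) + 1/a = d"
      using det \<open>a > 0\<close> by (simp_all add: field_simps)
    then have "f_frame a b c d = f_frame a 0 c (1/a)"
      using f_frame_mult_upper[of a "1/a" 0 c "b/a"] \<open>a > 0\<close> by simp
    also have "\<dots> = f_frame 1 0 (c/a) 1"
      using f_frame_mult_diagonal[of 1 1 0 "c/a" a] \<open>a > 0\<close> by simp
    also have "\<dots> = f_frame 1 0 0 1"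
      using f_frame_mult_lower[of 1 1 0 0 "c/a"] by simp
    finally show ?thesis .
  qed
  have nonzero: "f_frame a b c d = f_frame 1 0 0 1" if det: "a*d - b*c = 1" and "a \<noteq> 0" for a b c d
  proof (cases "a > 0")
    case False
    then have "-a > 0" "(-a)*(-d) - (-b)*(-c) = 1" using det \<open>a \<noteq> 0\<close> by auto
    then show ?thesis using pos[of "-a" "-d" "-b" "-c"] f_frame_uminus[of a b c d] by simp
  qed (use pos[OF det] in simp)
  show ?thesis
  proof (cases "a = 0")
    case True
    then have "a + b*1 \<noteq> 0" "(a + b*1) * d - b * (c + d*1) = 1" using det by (auto simp: algebra_simps)
    then show ?thesis
      using f_frame_mult_lower[OF det, of 1] nonzero[of "a + b*1" d b "c + d*1"] by simp
  qed (use nonzero[OF det] in simp)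
qed

lemma f_slice_constant:
  assumes "Im w > 0"
  shows "f (w, \<phi>, 0) = f_frame 1 0 0 1"
proof -
  obtain a b c d where det: "a*d - b*c = 1" and "tangent_act a b c d (\<i>, \<i>) = (w, cis \<phi>)"
    using tangent_act_transitive[OF assms] by metis
  then have "f_frame a b c d = f (w, \<phi>, 0)"
    using f_Arg_cis[OF assms] by (simp add: f_frame_def f_tangent_def)
  then show ?thesis using f_frame_constant[OF det] by simp
qed

text \<open>Every point is joined to the slice \<open>t = 0\<close> by an integral curve of \<open>Yv - Tv\<close>: the
  image of \<open>semicircle_has_vector_derivative\<close> under a frame moving \<open>(\<i>, pi/2)\<close> to the point.\<close>
lemma f_constant:
  assumes z: "Im z > 0"
  shows "f (z, \<phi>, t) = f_frame 1 0 0 1"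
proof -
  obtain a b c d where det: "a*d - b*c = 1" and nrm: "c > 0 \<or> (c = 0 \<and> d > 0)"
    and frame: "tangent_act a b c d (\<i>, \<i>) = (z, cis \<phi>)"
    by (rule tangent_act_transitive[OF z])
  define \<gamma> where "\<gamma> = (\<lambda>s. (cis (2 * arctan (exp s)), 2 * arctan (exp s), t - s))"
  let ?L = "\<lambda>s. coord_act a b c d (\<gamma> s)"
  have Im_\<gamma>: "Im (fst (\<gamma> s)) > 0" for s
    using Im_cis_2_arctan_exp_pos by (simp add: \<gamma>_def)
  have \<gamma>': "(\<gamma> has_vector_derivative (0 *\<^sub>R Xv (\<gamma> s) + 1 *\<^sub>R Yv (\<gamma> s) + (-1) *\<^sub>R Tv)) (at s)" for s
    unfolding \<gamma>_def by (rule semicircle_has_vector_derivative)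
  have "f (?L 0) = f (?L t)"
  proof (rule constant_along_characteristic[where A = 0 and B = 1])
    show "?L s \<in> Mdom" for s
      using Im_mobius_pos[OF det Im_\<gamma>] by (simp add: mem_Mdom_iff coord_act_def)
    show "(?L has_vector_derivative (0 *\<^sub>R Xv (?L s) + 1 *\<^sub>R Yv (?L s) + (-1) *\<^sub>R Tv)) (at s)" for s
      using coord_act_pushes_frame[OF det nrm \<gamma>'[of s] Im_\<gamma>[of s]] by simp
  qed simp
  moreover have "\<gamma> 0 = (\<i>, pi/2, t)"
    by (simp add: \<gamma>_def complex_eq_iff)
  then have "f (?L 0) = f (z, \<phi>, t)"
    using f_coord_act[OF det, of \<i> "pi/2" t] frame f_Arg_cis[OF z]
    by (simp add: tangent_act_def)
  moreover have "f (?L t) = f_frame 1 0 0 1"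
    using f_slice_constant Im_mobius_pos[OF det Im_\<gamma>[of t]] by (simp add: coord_act_def \<gamma>_def)
  ultimately show ?thesis by simp
qed

end

theorem mainTheorem7:
  fixes \<Gamma> :: "(real^2^2) set" and f :: "complex \<times> real \<times> real \<Rightarrow> real"
  assumes "cocompact_fuchsian \<Gamma>"
    and "Cinf_on Mdom f"
    and "Gamma_invariant \<Gamma> f"
    and "\<forall>p\<in>Mdom. dderiv f p (Xv p) + tanh (snd (snd p)) * dderiv f p Zv = 0"
    and "\<forall>p\<in>Mdom. dderiv f p (Yv p) - dderiv f p Tv = 0"
  shows "\<exists>c. \<forall>p\<in>Mdom. f p = c"
proof -
  interpret dA_closed \<Gamma> f
    using assms by unfold_locales
  have "f p = f_frame 1 0 0 1" if "p \<in> Mdom" for p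
    using that f_constant by (cases p) (simp add: mem_Mdom_iff)
  then show ?thesis by blast
qed

end
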